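(* Let $A,B \in M_n(\mathbb{R}_+)$ be two triangularizable matrices. Then $A$ and $B$ are simultaneously triangularizable if and only if the union $G_A \cup G_B$ of their digraphs has no directed multi-vertex cycles.
   Context: Max algebra: $\mathbb{R}_+$ the nonnegative reals with $a\oplus b=\max\{a,b\}$ and ordinary multiplication. For $A,B\in M_n(\mathbb{R}_+)$, $(AB)_{ij}=\max_k a_{ik}b_{kj}$ and $(A\oplus B)_{ij}=\max\{a_{ij},b_{ij}\}$. $GL_n(\mathbb{R}_+)$ is the set of matrices invertible under this product (the generalized permutation matrices). $A$ is triangularizable if $P^{-1}AP$ is upper triangular for some $P\in GL_n(\mathbb{R}_+)$; $A,B$ are simultaneously triangularizable if there is one $P\in GL_n(\mathbb{R}_+)$ with both $P^{-1}AP$ and $P^{-1}BP$ upper triangular. The digraph $G_A$ has vertices $\{1,\dots,n\}$ and an edge $i\to j$ iff $a_{ij}>0$; $G_A\cup G_B$ has vertices $\{1,\dots,n\}$ and the union of the edge sets (it equals $G_{A\oplus B}$). A directed multi-vertex cycle is a directed simple cycle through at least two distinct vertices. *)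

theory Defs
  imports Complex_Main
begin

text \<open>n x n matrices over the max algebra R_+ are represented as functions
  nat => nat => real; only the entries with indices < n are relevant.\<close>

definition nonneg_mat :: "nat \<Rightarrow> (nat \<Rightarrow> nat \<Rightarrow> real) \<Rightarrow> bool" where
  "nonneg_mat n A \<longleftrightarrow> (\<forall>i<n. \<forall>j<n. 0 \<le> A i j)"

definition max_mult :: "nat \<Rightarrow> (nat \<Rightarrow> nat \<Rightarrow> real) \<Rightarrow> (nat \<Rightarrow> nat \<Rightarrow> real) \<Rightarrow> (nat \<Rightarrow> nat \<Rightarrow> real)" where
  "max_mult n A B = (\<lambda>i j. Max ((\<lambda>k. A i k * B k j) ` {..<n}))"

definition id_mat :: "nat \<Rightarrow> nat \<Rightarrow> real" where
  "id_mat i j = (if i = j then 1 else 0)"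

definition mat_eq :: "nat \<Rightarrow> (nat \<Rightarrow> nat \<Rightarrow> real) \<Rightarrow> (nat \<Rightarrow> nat \<Rightarrow> real) \<Rightarrow> bool" where
  "mat_eq n A B \<longleftrightarrow> (\<forall>i<n. \<forall>j<n. A i j = B i j)"

definition max_inverse_pair :: "nat \<Rightarrow> (nat \<Rightarrow> nat \<Rightarrow> real) \<Rightarrow> (nat \<Rightarrow> nat \<Rightarrow> real) \<Rightarrow> bool" where
  "max_inverse_pair n P Q \<longleftrightarrow> nonneg_mat n P \<and> nonneg_mat n Q \<and>
     mat_eq n (max_mult n P Q) id_mat \<and> mat_eq n (max_mult n Q P) id_mat"

definition upper_triangular :: "nat \<Rightarrow> (nat \<Rightarrow> nat \<Rightarrow> real) \<Rightarrow> bool" where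
  "upper_triangular n M \<longleftrightarrow> (\<forall>i<n. \<forall>j<n. j < i \<longrightarrow> M i j = 0)"

definition triangularizable :: "nat \<Rightarrow> (nat \<Rightarrow> nat \<Rightarrow> real) \<Rightarrow> bool" where
  "triangularizable n A \<longleftrightarrow> (\<exists>P Q. max_inverse_pair n P Q \<and>
     upper_triangular n (max_mult n Q (max_mult n A P)))"

definition simult_triangularizable :: "nat \<Rightarrow> (nat \<Rightarrow> nat \<Rightarrow> real) \<Rightarrow> (nat \<Rightarrow> nat \<Rightarrow> real) \<Rightarrow> bool" where
  "simult_triangularizable n A B \<longleftrightarrow> (\<exists>P Q. max_inverse_pair n P Q \<and>
     upper_triangular n (max_mult n Q (max_mult n A P)) \<and>
     upper_triangular n (max_mult n Q (max_mult n B P)))"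

definition union_digraph :: "nat \<Rightarrow> (nat \<Rightarrow> nat \<Rightarrow> real) \<Rightarrow> (nat \<Rightarrow> nat \<Rightarrow> real) \<Rightarrow> nat \<Rightarrow> nat \<Rightarrow> bool" where
  "union_digraph n A B i j \<longleftrightarrow> i < n \<and> j < n \<and> (0 < A i j \<or> 0 < B i j)"

definition has_multivertex_cycle :: "nat \<Rightarrow> (nat \<Rightarrow> nat \<Rightarrow> bool) \<Rightarrow> bool" where
  "has_multivertex_cycle n E \<longleftrightarrow> (\<exists>vs. 2 \<le> length vs \<and> distinct vs \<and> set vs \<subseteq> {..<n} \<and>
     (\<forall>i<length vs. E (vs ! i) (vs ! ((i + 1) mod length vs))))"

end

theory Submission
  imports Defs
begin

text \<open>An invertible matrix of the max algebra is a generalized permutation matrix, so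
  conjugating by it only relabels the vertices of the digraph (and rescales the positive
  entries). Hence \<open>A\<close> and \<open>B\<close> are simultaneously triangularizable iff some
  ordering of the vertices sends every edge of \<open>G\<^sub>A \<union> G\<^sub>B\<close> forward or onto itself.
  Along a multi-vertex cycle the position would have to increase strictly all the way round,
  which is impossible; conversely, without such cycles every nonempty vertex set has a sink,
  and removing sinks one at a time produces the required ordering.\<close>

lemma no_multivertex_cycle_if_strict_potential:
  fixes f :: "nat \<Rightarrow> 'a::linorder"
  assumes "\<And>u v. E u v \<Longrightarrow> u \<noteq> v \<Longrightarrow> f u < f v"
  shows "\<not> has_multivertex_cycle n E"
proof
  assume "has_multivertex_cycle n E"
  then obtain vs where len: "2 \<le> length vs" and dist: "distinct vs"
    and edge: "\<And>i. i < length vs \<Longrightarrow> E (vs ! i) (vs ! ((i + 1) mod length vs))"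
    unfolding has_multivertex_cycle_def by blast
  define L where "L = length vs"
  have "Max (f ` set vs) \<in> f ` set vs"
    using len by (intro Max_in) auto
  then obtain i where i: "i < L" "f (vs ! i) = Max (f ` set vs)"
    by (auto simp: L_def in_set_conv_nth)
  define i' where "i' = (i + 1) mod L"
  have i': "i' < L" "i' \<noteq> i"
    using i(1) len by (auto simp: i'_def L_def mod_Suc)
  have "vs ! i \<noteq> vs ! i'"
    using dist i(1) i' by (simp add: L_def nth_eq_iff_index_eq)
  then have "f (vs ! i) < f (vs ! i')"
    using assms edge[of i] i(1) by (simp add: L_def i'_def)
  moreover have "f (vs ! i') \<le> Max (f ` set vs)"
    using i' by (simp add: L_def)
  ultimately show False
    using i(2) by simp
qed

lemma walk_has_first_repetition:
  fixes w :: "nat \<Rightarrow> 'a"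
  assumes "finite S" and "\<And>k. w k \<in> S"
  obtains i j where "i < j" "w i = w j" "inj_on w {i..<j}"
proof -
  have "\<not> inj w"
    using assms finite_imageD[of w UNIV] finite_subset[of "range w" S] by auto
  then have ex: "\<exists>j. \<exists>i<j. w i = w j"
    unfolding inj_def by (metis linorder_neqE_nat)
  define j where "j = (LEAST j. \<exists>i<j. w i = w j)"
  obtain i where "i < j" "w i = w j"
    using LeastI_ex[OF ex] unfolding j_def by blast
  moreover have "inj_on w {i..<j}"
  proof (rule inj_onI, rule ccontr)
    fix x y assume "x \<in> {i..<j}" "y \<in> {i..<j}" "w x = w y" "x \<noteq> y"
    then have "\<exists>y'<j. \<exists>x'<y'. w x' = w y'"
      by (metis atLeastLessThan_iff linorder_neqE_nat)
    then show False
      unfolding j_def using not_less_Least by blast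
  qed
  ultimately show ?thesis
    using that by blast
qed

lemma multivertex_cycle_of_closed_walk:
  assumes "Suc i < j" "w i = w j" "inj_on w {i..<j}" "w ` {i..<j} \<subseteq> {..<n}"
    and "\<And>k. i \<le> k \<Longrightarrow> k < j \<Longrightarrow> E (w k) (w (Suc k))"
  shows "has_multivertex_cycle n E"
  unfolding has_multivertex_cycle_def
proof (intro exI conjI allI impI)
  let ?vs = "map w [i..<j]"
  show "2 \<le> length ?vs" "distinct ?vs" "set ?vs \<subseteq> {..<n}"
    using assms(1,3,4) by (auto simp: distinct_map)
  fix k assume k: "k < length ?vs"
  show "E (?vs ! k) (?vs ! ((k + 1) mod length ?vs))"
  proof (cases "Suc k < length ?vs")
    case True
    then show ?thesis
      using assms(5)[of "i + k"] by simp
  next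
    case False
    then have "Suc k = length ?vs"
      using k by simp
    then have "Suc (i + k) = j" "(k + 1) mod length ?vs = 0"
      by auto
    moreover have "?vs ! 0 = w i"
      using assms(1) by simp
    ultimately show ?thesis
      using k assms(2) assms(5)[of "i + k"] by simp
  qed
qed

lemma no_multivertex_cycle_obtains_sink:
  assumes "\<not> has_multivertex_cycle n E" and "S \<subseteq> {..<n}" and "S \<noteq> {}"
  obtains s where "s \<in> S" "\<And>u. u \<in> S \<Longrightarrow> E s u \<Longrightarrow> u = s"
proof -
  have "\<exists>s\<in>S. \<forall>u\<in>S. E s u \<longrightarrow> u = s"
  proof (rule ccontr)
    assume "\<not> (\<exists>s\<in>S. \<forall>u\<in>S. E s u \<longrightarrow> u = s)"
    then obtain nxt where nxt: "\<And>v. v \<in> S \<Longrightarrow> nxt v \<in> S \<and> E v (nxt v) \<and> nxt v \<noteq> v"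
      by metis
    obtain v0 where "v0 \<in> S"
      using assms(3) by blast
    define w where "w k = (nxt ^^ k) v0" for k
    have wS: "w k \<in> S" for k
      by (induction k) (auto simp: w_def \<open>v0 \<in> S\<close> nxt)
    have step: "E (w k) (w (Suc k))" "w (Suc k) \<noteq> w k" for k
      using nxt[OF wS[of k]] by (simp_all add: w_def)
    have "finite S"
      using assms(2) finite_subset by blast
    then obtain i j where ij: "i < j" "w i = w j" "inj_on w {i..<j}"
      using walk_has_first_repetition wS by metis
    have "Suc i < j"
      using ij step(2)[of i] by (metis Suc_lessI)
    then have "has_multivertex_cycle n E"
      using ij wS assms(2) step(1) by (intro multivertex_cycle_of_closed_walk) auto
    then show False
      using assms(1) by blast
  qed
  then show ?thesis
    using that by blast
qed

lemma topological_order_if_no_multivertex_cycle: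
  assumes "\<not> has_multivertex_cycle n E" and "S \<subseteq> {..<n}"
  obtains ls where "distinct ls" "set ls = S"
    "\<And>a b. a < length ls \<Longrightarrow> b < a \<Longrightarrow> \<not> E (ls ! a) (ls ! b)"
proof -
  have "finite S"
    using assms(2) finite_subset by blast
  then have "\<exists>ls. distinct ls \<and> set ls = S \<and>
      (\<forall>a<length ls. \<forall>b<a. \<not> E (ls ! a) (ls ! b))"
    using assms(2)
  proof (induction S rule: finite_psubset_induct)
    case (psubset S)
    show ?case
    proof (cases "S = {}")
      case True
      then show ?thesis by simp
    next
      case False
      obtain s where s: "s \<in> S" "\<And>u. u \<in> S \<Longrightarrow> E s u \<Longrightarrow> u = s"
        using no_multivertex_cycle_obtains_sink[OF assms(1) psubset.prems False] by blast
      obtain xs where xs: "distinct xs" "set xs = S - {s}"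
          "\<forall>a<length xs. \<forall>b<a. \<not> E (xs ! a) (xs ! b)"
        using psubset.IH[of "S - {s}"] psubset.prems s(1) by blast
      have "\<not> E ((xs @ [s]) ! a) ((xs @ [s]) ! b)" if "a < Suc (length xs)" "b < a" for a b
      proof (cases "a = length xs")
        case True
        then show ?thesis
          using that s(2)[of "xs ! b"] xs(2) nth_mem[of b xs] by (auto simp: nth_append)
      next
        case False
        then show ?thesis
          using that xs(3) by (simp add: nth_append)
      qed
      then show ?thesis
        using xs s(1) by (intro exI[of _ "xs @ [s]"]) auto
    qed
  qed
  then show ?thesis
    using that by blast
qed

lemma max_mult_ge:
  assumes "k < n"
  shows "A i k * B k j \<le> max_mult n A B i j"
  unfolding max_mult_def using assms by (intro Max_ge) auto

lemma max_mult_eq_single_term: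
  assumes "m < n" and "0 \<le> A i m * B m j"
    and "\<And>k. k < n \<Longrightarrow> k \<noteq> m \<Longrightarrow> A i k * B k j = 0"
  shows "max_mult n A B i j = A i m * B m j"
  unfolding max_mult_def using assms by (intro Max_eqI) (force simp del: mult_eq_0_iff)+

definition perm_mat :: "(nat \<Rightarrow> nat) \<Rightarrow> nat \<Rightarrow> nat \<Rightarrow> real" where
  "perm_mat g i j = (if i = g j then 1 else 0)"

definition transpose_mat :: "(nat \<Rightarrow> nat \<Rightarrow> real) \<Rightarrow> nat \<Rightarrow> nat \<Rightarrow> real" where
  "transpose_mat M i j = M j i"

lemma max_mult_perm_mat_right:
  assumes "g j < n" and "0 \<le> M i (g j)"
  shows "max_mult n M (perm_mat g) i j = M i (g j)"
  using max_mult_eq_single_term[of "g j" n M i "perm_mat g" j] assms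
  by (simp add: perm_mat_def)

lemma max_mult_transpose_perm_mat_left:
  assumes "g i < n" and "0 \<le> M (g i) j"
  shows "max_mult n (transpose_mat (perm_mat g)) M i j = M (g i) j"
  using max_mult_eq_single_term[of "g i" n "transpose_mat (perm_mat g)" i M j] assms
  by (simp add: perm_mat_def transpose_mat_def)

lemma perm_mat_conj_entry:
  assumes "nonneg_mat n M" and "g i < n" and "g j < n"
  shows "max_mult n (transpose_mat (perm_mat g)) (max_mult n M (perm_mat g)) i j = M (g i) (g j)"
  using assms by (simp add: max_mult_transpose_perm_mat_left max_mult_perm_mat_right nonneg_mat_def)

lemma max_inverse_pair_perm_mat:
  assumes "bij_betw g {..<n} {..<n}"
  shows "max_inverse_pair n (perm_mat g) (transpose_mat (perm_mat g))"
  unfolding max_inverse_pair_def mat_eq_def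
proof (intro conjI allI impI)
  have g: "g i < n" "i < n \<Longrightarrow> j < n \<Longrightarrow> g i = g j \<longleftrightarrow> i = j" if "i < n" for i j
    using assms that by (auto simp: bij_betw_def inj_on_def)
  show "nonneg_mat n (perm_mat g)" "nonneg_mat n (transpose_mat (perm_mat g))"
    by (auto simp: nonneg_mat_def perm_mat_def transpose_mat_def)
  fix i j assume ij: "i < n" "j < n"
  obtain k where k: "k < n" "g k = i"
    using assms ij(1) by (metis bij_betw_iff_bijections lessThan_iff)
  show "max_mult n (perm_mat g) (transpose_mat (perm_mat g)) i j = id_mat i j"
    using max_mult_eq_single_term[of k n "perm_mat g" i "transpose_mat (perm_mat g)" j] k ij g
    by (auto simp: perm_mat_def transpose_mat_def id_mat_def)
  show "max_mult n (transpose_mat (perm_mat g)) (perm_mat g) i j = id_mat i j"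
    using ij g by (simp add: max_mult_transpose_perm_mat_left perm_mat_def id_mat_def)
qed

lemma max_inverse_pair_diag_witness:
  assumes "max_inverse_pair n P Q" and "v < n"
  obtains m where "m < n" "0 < P v m" "0 < Q m v"
proof -
  have "max_mult n P Q v v = 1"
    using assms unfolding max_inverse_pair_def mat_eq_def id_mat_def by simp
  moreover have "max_mult n P Q v v \<in> (\<lambda>k. P v k * Q k v) ` {..<n}"
    unfolding max_mult_def using assms(2) by (intro Max_in) auto
  ultimately obtain m where m: "m < n" "P v m * Q m v = 1"
    by auto
  moreover have "0 \<le> P v m" "0 \<le> Q m v"
    using assms m(1) unfolding max_inverse_pair_def nonneg_mat_def by auto
  ultimately show ?thesis
    using that by (metis less_eq_real_def mult_eq_0_iff zero_neq_one)
qed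

lemma max_inverse_pair_positive_path_eq:
  assumes "max_inverse_pair n P Q" and "k < n" "l < n" "m < n"
    and "0 < P k m" "0 < Q m l"
  shows "k = l"
proof -
  have "0 < max_mult n P Q k l"
    using max_mult_ge[OF assms(4), of P k Q l] assms(5,6) by (meson less_le_trans mult_pos_pos)
  then show ?thesis
    using assms(1-3) unfolding max_inverse_pair_def mat_eq_def id_mat_def by (auto split: if_splits)
qed

text \<open>A positive path \<open>a \<rightarrow> k \<rightarrow> l \<rightarrow> b\<close> through \<open>Q\<close>, \<open>M\<close>, \<open>P\<close> makes the entry \<open>(a, b)\<close>
  of \<open>QMP\<close> positive.\<close>

lemma upper_triangular_conj_path_le:
  assumes "upper_triangular n (max_mult n Q (max_mult n M P))"
    and "a < n" "b < n" "k < n" "l < n"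
    and "0 < Q a k" "0 < M k l" "0 < P l b"
  shows "a \<le> b"
proof (rule ccontr)
  assume "\<not> a \<le> b"
  have "0 < Q a k * (M k l * P l b)"
    using assms(6-8) by simp
  also have "\<dots> \<le> Q a k * max_mult n M P k b"
    using assms(5,6) max_mult_ge by (simp add: mult_left_mono less_imp_le)
  also have "\<dots> \<le> max_mult n Q (max_mult n M P) a b"
    using assms(4) by (rule max_mult_ge)
  finally show False
    using assms(1-3) \<open>\<not> a \<le> b\<close> unfolding upper_triangular_def by simp
qed

lemma simult_triangularizable_imp_no_multivertex_cycle:
  assumes "simult_triangularizable n A B"
  shows "\<not> has_multivertex_cycle n (union_digraph n A B)"
proof -
  obtain P Q where PQ: "max_inverse_pair n P Q"
    and tA: "upper_triangular n (max_mult n Q (max_mult n A P))"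
    and tB: "upper_triangular n (max_mult n Q (max_mult n B P))"
    using assms unfolding simult_triangularizable_def by blast
  have "\<exists>m. v < n \<longrightarrow> m < n \<and> 0 < P v m \<and> 0 < Q m v" for v
    using max_inverse_pair_diag_witness[OF PQ, of v] by blast
  then obtain pos where pos: "\<And>v. v < n \<Longrightarrow> pos v < n \<and> 0 < P v (pos v) \<and> 0 < Q (pos v) v"
    by metis
  have "pos u < pos v" if "union_digraph n A B u v" "u \<noteq> v" for u v
  proof -
    have "u < n" "v < n"
      using that(1) by (auto simp: union_digraph_def)
    note uv = this pos[OF this(1)] pos[OF this(2)]
    have "pos u \<le> pos v"
      using that(1) upper_triangular_conj_path_le[OF tA] upper_triangular_conj_path_le[OF tB] uv
      by (auto simp: union_digraph_def)
    moreover have "pos u \<noteq> pos v"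
      using max_inverse_pair_positive_path_eq[OF PQ, of u v "pos u"] uv that(2) by auto
    ultimately show ?thesis
      by simp
  qed
  then show ?thesis
    by (rule no_multivertex_cycle_if_strict_potential)
qed

lemma no_multivertex_cycle_imp_simult_triangularizable:
  assumes "nonneg_mat n A" and "nonneg_mat n B"
    and "\<not> has_multivertex_cycle n (union_digraph n A B)"
  shows "simult_triangularizable n A B"
proof -
  obtain ls where ls: "distinct ls" "set ls = {..<n}"
    and forward: "\<And>a b. a < length ls \<Longrightarrow> b < a \<Longrightarrow> \<not> union_digraph n A B (ls ! a) (ls ! b)"
    using topological_order_if_no_multivertex_cycle[OF assms(3), of "{..<n}"] by blast
  have len: "length ls = n"
    using ls distinct_card by fastforce
  define g where "g = (!) ls"
  have g: "bij_betw g {..<n} {..<n}"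
    unfolding g_def using ls len by (intro bij_betw_nth) auto
  have "upper_triangular n (max_mult n (transpose_mat (perm_mat g)) (max_mult n M (perm_mat g)))"
    if M: "nonneg_mat n M" "\<And>u v. 0 < M u v \<Longrightarrow> u < n \<Longrightarrow> v < n \<Longrightarrow> union_digraph n A B u v"
    for M
    unfolding upper_triangular_def
  proof (intro allI impI)
    fix i j assume ij: "i < n" "j < n" "j < i"
    have gij: "g i < n" "g j < n"
      using g ij by (auto simp: bij_betw_def)
    have "\<not> 0 < M (g i) (g j)"
      using M(2) forward ij gij len unfolding g_def by blast
    then show "max_mult n (transpose_mat (perm_mat g)) (max_mult n M (perm_mat g)) i j = 0"
      using perm_mat_conj_entry[of n M g i j] M(1) gij unfolding nonneg_mat_def by force
  qed
  then show ?thesis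
    unfolding simult_triangularizable_def
    using assms(1,2) max_inverse_pair_perm_mat[OF g] by (auto simp: union_digraph_def)
qed

theorem theorem3p3:
  fixes n :: nat and A B :: "nat \<Rightarrow> nat \<Rightarrow> real"
  assumes "nonneg_mat n A" and "nonneg_mat n B"
    and "triangularizable n A" and "triangularizable n B"
  shows "simult_triangularizable n A B \<longleftrightarrow>
         \<not> has_multivertex_cycle n (union_digraph n A B)"
  using simult_triangularizable_imp_no_multivertex_cycle
    no_multivertex_cycle_imp_simult_triangularizable[OF assms(1,2)] by blast

end
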